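(* Let $s\in(0,1)$, $N>2s$, $2_s^*=\frac{2N}{N-2s}$, and $\Omega\subset\mathbb{R}^N$ a smooth bounded domain. On $D_0^{s,2}(\Omega)$ let $\|u\|^2=\int_{\mathbb{R}^{2N}}\frac{|u(x)-u(y)|^2}{|x-y|^{N+2s}}dxdy+|u|_2^2$. For $p\in(2,2_s^*]$ let $I_p(u)=\frac12\|u\|^2-\frac1p|u|_p^p$ and $\mathcal N_p=\{u\in D_0^{s,2}(\Omega)\setminus\{0\}:\|u\|^2=|u|_p^p\}$; set $m_p=\inf_{\mathcal N_p}I_p$ for $p<2_s^*$ and $m_*=\inf_{\mathcal N_{2_s^*}}I_{2_s^*}$. Then $$\lim_{p\to2_s^*}m_p=m_*.$$
   Context: $D_0^{s,2}(\Omega)$ is the space of functions $u\in L^{2_s^*}(\mathbb{R}^N)$ with finite Gagliardo seminorm and $u\equiv0$ outside $\Omega$; $|\cdot|_q$ is the $L^q(\Omega)$ norm. *)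

theory Defs
  imports "HOL-Analysis.Analysis"
begin

fun Ck :: "nat \<Rightarrow> ('a::euclidean_space \<Rightarrow> real) \<Rightarrow> bool" where
  "Ck 0 f = continuous_on UNIV f"
| "Ck (Suc k) f = (f differentiable_on UNIV \<and>
      (\<forall>i\<in>Basis. Ck k (\<lambda>x. frechet_derivative f (at x) i)))"

definition C_infinity :: "('a::euclidean_space \<Rightarrow> real) \<Rightarrow> bool" where
  "C_infinity f \<longleftrightarrow> (\<forall>k. Ck k f)"

definition smooth_bounded_domain :: "('a::euclidean_space) set \<Rightarrow> bool" where
  "smooth_bounded_domain \<Omega> \<longleftrightarrow> open \<Omega> \<and> connected \<Omega> \<and> bounded \<Omega> \<and> \<Omega> \<noteq> {} \<and>
     (\<exists>\<phi>. C_infinity \<phi> \<and> \<Omega> = {x. \<phi> x < 0} \<and>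
          (\<forall>x. \<phi> x = 0 \<longrightarrow> frechet_derivative \<phi> (at x) \<noteq> (\<lambda>_. 0)))"

definition crit_exp :: "real \<Rightarrow> nat \<Rightarrow> real" where
  "crit_exp s N = 2 * real N / (real N - 2 * s)"

definition gagliardo :: "real \<Rightarrow> ('a::euclidean_space \<Rightarrow> real) \<Rightarrow> ennreal" where
  "gagliardo s u = (\<integral>\<^sup>+ z. ennreal (\<bar>u (fst z) - u (snd z)\<bar>\<^sup>2 /
        norm (fst z - snd z) powr (real DIM('a) + 2 * s)) \<partial>(lebesgue \<Otimes>\<^sub>M lebesgue))"

definition D0 :: "real \<Rightarrow> ('a::euclidean_space) set \<Rightarrow> ('a \<Rightarrow> real) set" where
  "D0 s \<Omega> = {u. u \<in> borel_measurable lebesgue \<and>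
       integrable lebesgue (\<lambda>x. \<bar>u x\<bar> powr crit_exp s DIM('a)) \<and>
       gagliardo s u < \<infinity> \<and> (\<forall>x. x \<notin> \<Omega> \<longrightarrow> u x = 0)}"

definition Lq_pow :: "('a::euclidean_space) set \<Rightarrow> real \<Rightarrow> ('a \<Rightarrow> real) \<Rightarrow> real" where
  "Lq_pow \<Omega> q u = (LINT x:\<Omega>|lebesgue. \<bar>u x\<bar> powr q)"

definition norm_sq :: "real \<Rightarrow> ('a::euclidean_space) set \<Rightarrow> ('a \<Rightarrow> real) \<Rightarrow> real" where
  "norm_sq s \<Omega> u = enn2real (gagliardo s u) + Lq_pow \<Omega> 2 u"

definition I_fun :: "real \<Rightarrow> ('a::euclidean_space) set \<Rightarrow> real \<Rightarrow> ('a \<Rightarrow> real) \<Rightarrow> real" where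
  "I_fun s \<Omega> p u = norm_sq s \<Omega> u / 2 - Lq_pow \<Omega> p u / p"

(* Nehari manifold; u \<noteq> 0 in the function space means: not a.e. zero *)
definition Nehari :: "real \<Rightarrow> ('a::euclidean_space) set \<Rightarrow> real \<Rightarrow> ('a \<Rightarrow> real) set" where
  "Nehari s \<Omega> p = {u \<in> D0 s \<Omega>. \<not> (AE x in lebesgue. u x = 0) \<and>
                                norm_sq s \<Omega> u = Lq_pow \<Omega> p u}"

definition nehari_level :: "real \<Rightarrow> ('a::euclidean_space) set \<Rightarrow> real \<Rightarrow> real" where
  "nehari_level s \<Omega> p = Inf (I_fun s \<Omega> p ` Nehari s \<Omega> p)"

end

theory Submission
  imports Defs
begin

text \<open>
  Let S_p be the infimum of the Rayleigh quotient ||u||^2 / |u|_p^2 over nonzero u. Rescaling u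
  onto the Nehari manifold shows m_p = (1/2 - 1/p) S_p^(p/(p-2)) for every p in (2, 2_s^*], so it
  suffices that S_p tends to S_* = S_(2_s^*). On the bounded domain \<Omega>, H\<ouml>lder's inequality
  gives S_p \<ge> |\<Omega>|^(2/2_s^* - 2/p) S_*, whose right-hand side tends to S_*; conversely, for each
  fixed u, dominated convergence gives |u|_p \<rightarrow> |u|_(2_s^*), hence limsup S_p \<le> S_*.
  No Sobolev inequality is needed: the argument works even if S_* were 0.
\<close>

lemma powr_le_one_plus_powr:
  fixes a p q :: real
  assumes "0 \<le> a" "0 < p" "p \<le> q"
  shows "a powr p \<le> 1 + a powr q"
proof (cases "a \<le> 1")
  case True
  then have "a powr p \<le> 1"
    using assms by (intro powr_le1) auto
  then show ?thesis using powr_ge_zero[of a q] by linarith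
next
  case False
  then have "a powr p \<le> a powr q" using assms by (intro powr_mono) auto
  then show ?thesis by linarith
qed

lemma powr_le_weighted_AM_GM:
  fixes a M \<theta> q :: real
  assumes a: "0 \<le> a" and M: "0 < M" and \<theta>: "0 < \<theta>" "\<theta> \<le> 1" and q: "0 < q"
  shows "a powr (\<theta> * q) \<le> M powr \<theta> * (\<theta> / M * a powr q + (1 - \<theta>))"
proof (cases "a = 0")
  case True
  then show ?thesis using M \<theta> by simp
next
  case False
  define x where "x = a powr q / M"
  have x: "x > 0" using False a M by (simp add: x_def)
  have "a powr (\<theta> * q) = (M * x) powr \<theta>"
    using M False a by (simp add: x_def powr_powr mult.commute)
  also have "\<dots> = M powr \<theta> * (x powr \<theta> * 1 powr (1 - \<theta>))"
    using M x by (simp add: powr_mult)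
  also have "\<dots> \<le> M powr \<theta> * (\<theta> * x + (1 - \<theta>) * 1)"
    by (intro mult_left_mono Youngs_inequality_0) (use \<theta> x in auto)
  finally show ?thesis by (simp add: x_def)
qed

lemma Inf_image_mult_powr:
  fixes X :: "real set" and c e :: real
  assumes X: "X \<noteq> {}" "\<And>x. x \<in> X \<Longrightarrow> 0 \<le> x" and c: "0 \<le> c" and e: "0 < e"
  shows "Inf ((\<lambda>x. c * x powr e) ` X) = c * Inf X powr e"
proof -
  define f where "f = (\<lambda>x::real. c * max x 0 powr e)"
  have mono: "mono f" unfolding f_def
    by (intro monoI mult_left_mono c powr_mono2) (auto simp: e less_imp_le)
  have cont: "continuous (at x within Y) f" for x Y
  proof -
    have "((\<lambda>y. max y 0 powr e) \<longlongrightarrow> max x 0 powr e) (at x within Y)"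
      by (rule tendsto_powr') (auto intro!: tendsto_max tendsto_ident_at tendsto_const e)
    then show ?thesis unfolding f_def continuous_within by (intro tendsto_mult tendsto_const)
  qed
  have bdd: "bdd_below X" using X(2) by (intro bdd_belowI) auto
  have "Inf X \<ge> 0" using X by (intro cInf_greatest) auto
  then have "c * Inf X powr e = f (Inf X)" by (simp add: f_def)
  also have "\<dots> = Inf (f ` X)" by (rule continuous_at_Inf_mono[OF mono cont X(1) bdd])
  also have "f ` X = (\<lambda>x. c * x powr e) ` X" using X(2) by (auto simp: f_def)
  finally show ?thesis ..
qed

definition D0_nonzero :: "real \<Rightarrow> ('a::euclidean_space) set \<Rightarrow> ('a \<Rightarrow> real) set" where
  "D0_nonzero s \<Omega> = {u \<in> D0 s \<Omega>. \<not> (AE x in lebesgue. u x = 0)}"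

lemma Nehari_subset_D0_nonzero: "Nehari s \<Omega> p \<subseteq> D0_nonzero s \<Omega>"
  unfolding Nehari_def D0_nonzero_def by auto

lemma D0_borel_measurable: "u \<in> D0 s \<Omega> \<Longrightarrow> u \<in> borel_measurable lebesgue"
  by (simp add: D0_def)

lemma Lq_pow_eq_integral:
  "Lq_pow \<Omega> p u = (\<integral>x. indicator \<Omega> x * \<bar>u x\<bar> powr p \<partial>lebesgue)"
  unfolding Lq_pow_def set_lebesgue_integral_def by simp

lemma Lq_pow_nonneg: "0 \<le> Lq_pow \<Omega> p u"
  unfolding Lq_pow_eq_integral by (rule integral_nonneg_AE) simp

lemma integrable_D0_powr_on:
  fixes \<Omega> :: "'a::euclidean_space set"
  assumes u: "u \<in> D0 s \<Omega>" and \<Omega>: "\<Omega> \<in> lmeasurable"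
    and p: "0 < p" "p \<le> crit_exp s DIM('a)"
  shows "integrable lebesgue (\<lambda>x. indicator \<Omega> x * \<bar>u x\<bar> powr p)"
proof (rule Bochner_Integration.integrable_bound)
  show "integrable lebesgue (\<lambda>x. indicator \<Omega> x + \<bar>u x\<bar> powr crit_exp s DIM('a) :: real)"
    using u \<Omega> by (simp add: D0_def lmeasurable_iff_integrable)
  show "(\<lambda>x. indicator \<Omega> x * \<bar>u x\<bar> powr p) \<in> borel_measurable lebesgue"
    using measurable_abs_powr[OF D0_borel_measurable[OF u]] \<Omega>
    by (intro borel_measurable_times borel_measurable_indicator) (auto simp: fmeasurable_def)
  show "AE x in lebesgue. norm (indicator \<Omega> x * \<bar>u x\<bar> powr p)
          \<le> norm (indicator \<Omega> x + \<bar>u x\<bar> powr crit_exp s DIM('a) :: real)"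
    using powr_le_one_plus_powr[of "\<bar>u _\<bar>" p "crit_exp s DIM('a)"] p
    by (auto simp: indicator_def)
qed

lemma measure_pos_if_D0_nonzero:
  assumes u: "u \<in> D0_nonzero s \<Omega>" and \<Omega>: "\<Omega> \<in> lmeasurable"
  shows "0 < measure lebesgue \<Omega>"
proof (rule ccontr)
  assume "\<not> 0 < measure lebesgue \<Omega>"
  then have "\<Omega> \<in> null_sets lebesgue"
    using \<Omega> measure_nonneg[of lebesgue \<Omega>]
    by (simp add: null_sets_def fmeasurableD emeasure_eq_measure2)
  then have "AE x in lebesgue. x \<notin> \<Omega>" by (rule AE_not_in)
  moreover have "\<forall>x. x \<notin> \<Omega> \<longrightarrow> u x = 0" using u by (simp add: D0_nonzero_def D0_def)
  ultimately have "AE x in lebesgue. u x = 0" by (auto elim!: eventually_mono)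
  with u show False by (simp add: D0_nonzero_def)
qed

lemma Lq_pow_pos:
  fixes \<Omega> :: "'a::euclidean_space set"
  assumes u: "u \<in> D0_nonzero s \<Omega>" and \<Omega>: "\<Omega> \<in> lmeasurable"
    and p: "0 < p" "p \<le> crit_exp s DIM('a)"
  shows "0 < Lq_pow \<Omega> p u"
proof -
  have uD: "u \<in> D0 s \<Omega>" using u by (simp add: D0_nonzero_def)
  have "Lq_pow \<Omega> p u \<noteq> 0"
  proof
    assume "Lq_pow \<Omega> p u = 0"
    then have "AE x in lebesgue. indicator \<Omega> x * \<bar>u x\<bar> powr p = 0"
      using integral_nonneg_eq_0_iff_AE[OF integrable_D0_powr_on[OF uD \<Omega> p]]
      unfolding Lq_pow_eq_integral by simp
    then have "AE x in lebesgue. u x = 0"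
      using uD by (auto simp: D0_def indicator_def elim!: eventually_mono split: if_splits)
    with u show False by (simp add: D0_nonzero_def)
  qed
  with Lq_pow_nonneg show ?thesis by (simp add: order_less_le)
qed

lemma norm_sq_pos:
  fixes \<Omega> :: "'a::euclidean_space set"
  assumes "u \<in> D0_nonzero s \<Omega>" "\<Omega> \<in> lmeasurable" "2 \<le> crit_exp s DIM('a)"
  shows "0 < norm_sq s \<Omega> u"
  using Lq_pow_pos[OF assms(1,2), of 2] assms(3) unfolding norm_sq_def
  by (simp add: add_nonneg_pos)

lemma gagliardo_integrand_measurable:
  fixes u :: "'a::euclidean_space \<Rightarrow> real"
  assumes u: "u \<in> borel_measurable lebesgue"
  shows "(\<lambda>z. ennreal (\<bar>u (fst z) - u (snd z)\<bar>\<^sup>2 / norm (fst z - snd z) powr (real DIM('a) + 2 * s)))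
           \<in> borel_measurable (lebesgue \<Otimes>\<^sub>M lebesgue)"
proof -
  have id: "(\<lambda>x. x) \<in> borel_measurable (lebesgue :: 'a measure)"
    by (rule measurable_completion) simp
  let ?M = "(lebesgue :: 'a measure) \<Otimes>\<^sub>M (lebesgue :: 'a measure)"
  have "(\<lambda>z. fst z) \<in> borel_measurable ?M" by (rule measurable_compose[OF measurable_fst id])
  moreover have "(\<lambda>z. snd z) \<in> borel_measurable ?M" by (rule measurable_compose[OF measurable_snd id])
  moreover have "(\<lambda>z. u (fst z)) \<in> borel_measurable ?M" by (rule measurable_compose[OF measurable_fst u])
  moreover have "(\<lambda>z. u (snd z)) \<in> borel_measurable ?M" by (rule measurable_compose[OF measurable_snd u])
  ultimately show ?thesis by measurable
qed

lemma gagliardo_scale: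
  fixes u :: "'a::euclidean_space \<Rightarrow> real"
  assumes u: "u \<in> borel_measurable lebesgue"
  shows "gagliardo s (\<lambda>x. t * u x) = ennreal (t\<^sup>2) * gagliardo s u"
proof -
  have "\<bar>t * u x - t * u y\<bar>\<^sup>2 = t\<^sup>2 * \<bar>u x - u y\<bar>\<^sup>2" for x y
    by (simp add: power2_eq_square algebra_simps abs_mult)
  then have "gagliardo s (\<lambda>x. t * u x) = (\<integral>\<^sup>+ z. ennreal (t\<^sup>2) *
      ennreal (\<bar>u (fst z) - u (snd z)\<bar>\<^sup>2 / norm (fst z - snd z) powr (real DIM('a) + 2 * s))
      \<partial>(lebesgue \<Otimes>\<^sub>M lebesgue))"
    unfolding gagliardo_def by (simp add: ennreal_mult[symmetric] mult_divide_mult_cancel_left_if)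
  also have "\<dots> = ennreal (t\<^sup>2) * gagliardo s u"
    unfolding gagliardo_def by (rule nn_integral_cmult[OF gagliardo_integrand_measurable[OF u]])
  finally show ?thesis .
qed

lemma Lq_pow_scale:
  assumes "0 < t"
  shows "Lq_pow \<Omega> p (\<lambda>x. t * u x) = t powr p * Lq_pow \<Omega> p u"
  unfolding Lq_pow_def using assms by (simp add: abs_mult powr_mult)

lemma D0_nonzero_scale:
  fixes u :: "'a::euclidean_space \<Rightarrow> real"
  assumes u: "u \<in> D0_nonzero s \<Omega>" and t: "0 < t"
  shows "(\<lambda>x. t * u x) \<in> D0_nonzero s \<Omega>"
proof -
  have m: "u \<in> borel_measurable lebesgue" using u by (simp add: D0_nonzero_def D0_def)
  have "integrable lebesgue (\<lambda>x. t powr crit_exp s DIM('a) * \<bar>u x\<bar> powr crit_exp s DIM('a))"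
    using u by (simp add: D0_nonzero_def D0_def)
  then have "integrable lebesgue (\<lambda>x. \<bar>t * u x\<bar> powr crit_exp s DIM('a))"
    using t by (simp add: abs_mult powr_mult)
  moreover have "gagliardo s (\<lambda>x. t * u x) < \<infinity>"
    using u gagliardo_scale[OF m, of s t] by (simp add: D0_nonzero_def D0_def ennreal_mult_less_top)
  ultimately show ?thesis using u m t by (simp add: D0_nonzero_def D0_def)
qed

lemma norm_sq_scale:
  fixes u :: "'a::euclidean_space \<Rightarrow> real"
  assumes u: "u \<in> D0 s \<Omega>" and t: "0 < t"
  shows "norm_sq s \<Omega> (\<lambda>x. t * u x) = t\<^sup>2 * norm_sq s \<Omega> u"
  using gagliardo_scale[OF D0_borel_measurable[OF u], of s t] Lq_pow_scale[OF t, of \<Omega> 2 u] t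
  unfolding norm_sq_def by (simp add: enn2real_mult powr_numeral algebra_simps)

subsection \<open>The Rayleigh quotient and the Nehari level\<close>

definition rayleigh :: "real \<Rightarrow> ('a::euclidean_space) set \<Rightarrow> real \<Rightarrow> ('a \<Rightarrow> real) \<Rightarrow> real" where
  "rayleigh s \<Omega> p u = norm_sq s \<Omega> u / Lq_pow \<Omega> p u powr (2/p)"

definition rayleigh_inf :: "real \<Rightarrow> ('a::euclidean_space) set \<Rightarrow> real \<Rightarrow> real" where
  "rayleigh_inf s \<Omega> p = Inf (rayleigh s \<Omega> p ` D0_nonzero s \<Omega>)"

lemma rayleigh_pos:
  fixes \<Omega> :: "'a::euclidean_space set"
  assumes "u \<in> D0_nonzero s \<Omega>" "\<Omega> \<in> lmeasurable" "2 \<le> p" "p \<le> crit_exp s DIM('a)"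
  shows "0 < rayleigh s \<Omega> p u"
  using norm_sq_pos[OF assms(1,2)] Lq_pow_pos[OF assms(1,2), of p] assms(3,4)
  unfolding rayleigh_def by simp

lemma bdd_below_rayleigh:
  fixes \<Omega> :: "'a::euclidean_space set"
  assumes "\<Omega> \<in> lmeasurable" "2 \<le> p" "p \<le> crit_exp s DIM('a)"
  shows "bdd_below (rayleigh s \<Omega> p ` D0_nonzero s \<Omega>)"
  using rayleigh_pos[OF _ assms] by (intro bdd_belowI[where m=0]) (auto intro: less_imp_le)

lemma rayleigh_inf_le:
  fixes \<Omega> :: "'a::euclidean_space set"
  assumes "u \<in> D0_nonzero s \<Omega>" "\<Omega> \<in> lmeasurable" "2 \<le> p" "p \<le> crit_exp s DIM('a)"
  shows "rayleigh_inf s \<Omega> p \<le> rayleigh s \<Omega> p u"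
  unfolding rayleigh_inf_def using assms(1) bdd_below_rayleigh[OF assms(2-4)] by (rule cInf_lower[OF imageI])

lemma rayleigh_inf_nonneg:
  fixes \<Omega> :: "'a::euclidean_space set"
  assumes "D0_nonzero s \<Omega> \<noteq> {}" "\<Omega> \<in> lmeasurable" "2 \<le> p" "p \<le> crit_exp s DIM('a)"
  shows "0 \<le> rayleigh_inf s \<Omega> p"
  unfolding rayleigh_inf_def using assms(1) rayleigh_pos[OF _ assms(2-4)]
  by (intro cInf_greatest) (auto intro: less_imp_le)

lemma rayleigh_scale:
  fixes \<Omega> :: "'a::euclidean_space set"
  assumes u: "u \<in> D0 s \<Omega>" and t: "0 < t" and p: "0 < p"
  shows "rayleigh s \<Omega> p (\<lambda>x. t * u x) = rayleigh s \<Omega> p u"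
proof -
  have "(t powr p * Lq_pow \<Omega> p u) powr (2/p) = t\<^sup>2 * Lq_pow \<Omega> p u powr (2/p)"
    using Lq_pow_nonneg t p by (simp add: powr_mult powr_powr powr_numeral)
  then show ?thesis unfolding rayleigh_def norm_sq_scale[OF u t] Lq_pow_scale[OF t]
    using t by simp
qed

lemma I_fun_Nehari:
  fixes \<Omega> :: "'a::euclidean_space set"
  assumes u: "u \<in> Nehari s \<Omega> p" and \<Omega>: "\<Omega> \<in> lmeasurable"
    and p: "2 < p" "p \<le> crit_exp s DIM('a)"
  shows "I_fun s \<Omega> p u = (1/2 - 1/p) * rayleigh s \<Omega> p u powr (p/(p-2))"
proof -
  define A where "A = norm_sq s \<Omega> u"
  have A: "A > 0"
    unfolding A_def using norm_sq_pos Nehari_subset_D0_nonzero u \<Omega> p by fastforce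
  have B: "Lq_pow \<Omega> p u = A" using u by (simp add: Nehari_def A_def)
  have "rayleigh s \<Omega> p u = A powr (1 - 2/p)"
    unfolding rayleigh_def B A_def[symmetric] using A by (simp add: powr_diff)
  then have "rayleigh s \<Omega> p u powr (p/(p-2)) = A powr ((1 - 2/p) * (p/(p-2)))"
    by (simp add: powr_powr)
  also have "(1 - 2/p) * (p/(p-2)) = 1" using p by (simp add: field_simps)
  finally show ?thesis unfolding I_fun_def B A_def[symmetric] using A by (simp add: algebra_simps)
qed

lemma Nehari_scaling:
  fixes \<Omega> :: "'a::euclidean_space set"
  assumes u: "u \<in> D0_nonzero s \<Omega>" and \<Omega>: "\<Omega> \<in> lmeasurable"
    and p: "2 < p" "p \<le> crit_exp s DIM('a)"
  obtains t where "0 < t" "(\<lambda>x. t * u x) \<in> Nehari s \<Omega> p"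
proof
  define A where "A = norm_sq s \<Omega> u"
  define B where "B = Lq_pow \<Omega> p u"
  have A: "A > 0" unfolding A_def using norm_sq_pos[OF u \<Omega>] p by simp
  have B: "B > 0" unfolding B_def using Lq_pow_pos[OF u \<Omega>] p by simp
  define t where "t = (A/B) powr (1/(p-2))"
  show t: "0 < t" using A B by (simp add: t_def)
  have "t powr p = t powr (p-2) * t powr 2" by (simp flip: powr_add)
  also have "t powr (p-2) = A/B" using A B p by (simp add: t_def powr_powr)
  finally have "t powr p * B = t\<^sup>2 * A" using B t by (simp add: powr_numeral)
  then have "norm_sq s \<Omega> (\<lambda>x. t * u x) = Lq_pow \<Omega> p (\<lambda>x. t * u x)"
    using u t unfolding D0_nonzero_def
    by (simp add: norm_sq_scale Lq_pow_scale A_def B_def)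
  then show "(\<lambda>x. t * u x) \<in> Nehari s \<Omega> p"
    using D0_nonzero_scale[OF u t] by (simp add: Nehari_def D0_nonzero_def)
qed

lemma nehari_level_eq_rayleigh_inf:
  fixes \<Omega> :: "'a::euclidean_space set"
  assumes ne: "D0_nonzero s \<Omega> \<noteq> {}" and \<Omega>: "\<Omega> \<in> lmeasurable"
    and p: "2 < p" "p \<le> crit_exp s DIM('a)"
  shows "nehari_level s \<Omega> p = (1/2 - 1/p) * rayleigh_inf s \<Omega> p powr (p/(p-2))"
proof -
  let ?f = "\<lambda>x. (1/2 - 1/p) * x powr (p/(p-2))"
  have "I_fun s \<Omega> p ` Nehari s \<Omega> p = ?f ` rayleigh s \<Omega> p ` D0_nonzero s \<Omega>"
  proof safe
    fix v assume "v \<in> Nehari s \<Omega> p"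
    then show "I_fun s \<Omega> p v \<in> ?f ` rayleigh s \<Omega> p ` D0_nonzero s \<Omega>"
      using I_fun_Nehari[OF _ \<Omega> p] Nehari_subset_D0_nonzero by blast
  next
    fix u assume u: "u \<in> D0_nonzero s \<Omega>"
    obtain t where t: "0 < t" "(\<lambda>x. t * u x) \<in> Nehari s \<Omega> p"
      using Nehari_scaling[OF u \<Omega> p] .
    have "?f (rayleigh s \<Omega> p u) = I_fun s \<Omega> p (\<lambda>x. t * u x)"
      using I_fun_Nehari[OF t(2) \<Omega> p] rayleigh_scale[of u s \<Omega> t p] u t p
      by (simp add: D0_nonzero_def)
    then show "?f (rayleigh s \<Omega> p u) \<in> I_fun s \<Omega> p ` Nehari s \<Omega> p"
      using t(2) by blast
  qed
  moreover have "Inf (?f ` rayleigh s \<Omega> p ` D0_nonzero s \<Omega>) = ?f (rayleigh_inf s \<Omega> p)"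
    unfolding rayleigh_inf_def using ne p rayleigh_pos[OF _ \<Omega>, of _ s p]
    by (intro Inf_image_mult_powr) (auto intro: less_imp_le)
  ultimately show ?thesis unfolding nehari_level_def by simp
qed

subsection \<open>Continuity of S_p at the critical exponent\<close>

lemma Lq_pow_Holder:
  fixes s :: real and \<Omega> :: "'a::euclidean_space set"
  defines "q \<equiv> crit_exp s DIM('a)"
  assumes u: "u \<in> D0_nonzero s \<Omega>" and \<Omega>: "\<Omega> \<in> lmeasurable" and p: "0 < p" "p \<le> q"
  shows "Lq_pow \<Omega> p u \<le> measure lebesgue \<Omega> powr (1 - p/q) * Lq_pow \<Omega> q u powr (p/q)"
proof -
  define \<mu> where "\<mu> = measure lebesgue \<Omega>"
  define \<theta> where "\<theta> = p / q"
  define B where "B = Lq_pow \<Omega> q u"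
  have q: "q > 0" using p by simp
  have \<theta>: "0 < \<theta>" "\<theta> \<le> 1" using p q by (auto simp: \<theta>_def field_simps)
  have \<mu>: "\<mu> > 0" unfolding \<mu>_def by (rule measure_pos_if_D0_nonzero[OF u \<Omega>])
  have B: "B > 0" unfolding B_def q_def by (rule Lq_pow_pos[OF u \<Omega>]) (use q in \<open>auto simp: q_def\<close>)
  \<comment> \<open>Pointwise AM-GM at the scale of the mean of |u|^q over \<Omega> integrates to H\<ouml>lder.\<close>
  define M where "M = B / \<mu>"
  have M: "M > 0" using B \<mu> by (simp add: M_def)
  have uD: "u \<in> D0 s \<Omega>" using u by (simp add: D0_nonzero_def)
  have ip: "integrable lebesgue (\<lambda>x. indicator \<Omega> x * \<bar>u x\<bar> powr p)"
    using integrable_D0_powr_on[OF uD \<Omega>] p by (simp add: q_def)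
  have iq: "integrable lebesgue (\<lambda>x. indicator \<Omega> x * \<bar>u x\<bar> powr q)"
    using integrable_D0_powr_on[OF uD \<Omega>] q by (simp add: q_def)
  have ii: "integrable lebesgue (indicator \<Omega> :: _ \<Rightarrow> real)"
    using \<Omega> by (simp add: lmeasurable_iff_integrable)
  have "Lq_pow \<Omega> p u \<le> (\<integral>x. M powr \<theta> * (\<theta> / M) * (indicator \<Omega> x * \<bar>u x\<bar> powr q)
                  + M powr \<theta> * (1 - \<theta>) * indicator \<Omega> x \<partial>lebesgue)"
    unfolding Lq_pow_eq_integral
  proof (rule integral_mono[OF ip])
    show "integrable lebesgue (\<lambda>x. M powr \<theta> * (\<theta> / M) * (indicator \<Omega> x * \<bar>u x\<bar> powr q)
                  + M powr \<theta> * (1 - \<theta>) * indicator \<Omega> x)"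
      using iq ii by simp
    show "indicator \<Omega> x * \<bar>u x\<bar> powr p \<le> M powr \<theta> * (\<theta> / M) * (indicator \<Omega> x * \<bar>u x\<bar> powr q)
                  + M powr \<theta> * (1 - \<theta>) * indicator \<Omega> x" for x
      using powr_le_weighted_AM_GM[of "\<bar>u x\<bar>" M \<theta> q] M \<theta> q
      by (auto simp: indicator_def algebra_simps \<theta>_def)
  qed
  also have "\<dots> = M powr \<theta> * (\<theta> / M) * B + M powr \<theta> * (1 - \<theta>) * \<mu>"
    using iq ii by (simp add: B_def Lq_pow_eq_integral \<mu>_def)
  also have "\<dots> = \<mu> powr (1 - \<theta>) * B powr \<theta>"
    using B \<mu> by (simp add: M_def powr_divide powr_diff field_simps)
  finally show ?thesis by (simp add: \<mu>_def \<theta>_def B_def)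
qed

lemma rayleigh_ge_Holder:
  fixes s :: real and \<Omega> :: "'a::euclidean_space set"
  defines "q \<equiv> crit_exp s DIM('a)"
  assumes u: "u \<in> D0_nonzero s \<Omega>" and \<Omega>: "\<Omega> \<in> lmeasurable" and p: "2 \<le> p" "p \<le> q"
  shows "measure lebesgue \<Omega> powr (2/q - 2/p) * rayleigh s \<Omega> q u \<le> rayleigh s \<Omega> p u"
proof -
  define \<mu> where "\<mu> = measure lebesgue \<Omega>"
  define A where "A = norm_sq s \<Omega> u"
  define Bp where "Bp = Lq_pow \<Omega> p u"
  define Bq where "Bq = Lq_pow \<Omega> q u"
  have \<mu>: "\<mu> > 0" unfolding \<mu>_def by (rule measure_pos_if_D0_nonzero[OF u \<Omega>])
  have A: "A > 0" unfolding A_def using norm_sq_pos[OF u \<Omega>] p by (simp add: q_def)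
  have Bp: "Bp > 0" unfolding Bp_def using Lq_pow_pos[OF u \<Omega>] p by (simp add: q_def)
  have Bq: "Bq > 0" unfolding Bq_def q_def using Lq_pow_pos[OF u \<Omega>] p by (simp add: q_def)
  have "Bp powr (2/p) \<le> (\<mu> powr (1 - p/q) * Bq powr (p/q)) powr (2/p)"
    using Lq_pow_Holder[OF u \<Omega>] Bp p
    unfolding Bp_def Bq_def \<mu>_def q_def by (intro powr_mono2) auto
  also have "\<dots> = \<mu> powr ((1 - p/q) * (2/p)) * Bq powr ((p/q) * (2/p))"
    using \<mu> Bq by (simp add: powr_mult powr_powr)
  also have "(1 - p/q) * (2/p) = -(2/q - 2/p)" using p by (simp add: field_simps)
  also have "(p/q) * (2/p) = 2/q" using p by (simp add: field_simps)
  finally have "Bp powr (2/p) \<le> Bq powr (2/q) / \<mu> powr (2/q - 2/p)"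
    unfolding powr_minus_divide by simp
  then have "A / (Bq powr (2/q) / \<mu> powr (2/q - 2/p)) \<le> A / Bp powr (2/p)"
    using A Bp Bq \<mu> by (intro divide_left_mono) auto
  then show ?thesis
    using \<mu> unfolding rayleigh_def A_def Bp_def Bq_def \<mu>_def by (simp add: field_simps)
qed

lemma rayleigh_inf_ge_Holder:
  fixes s :: real and \<Omega> :: "'a::euclidean_space set"
  defines "q \<equiv> crit_exp s DIM('a)"
  assumes ne: "D0_nonzero s \<Omega> \<noteq> {}" and \<Omega>: "\<Omega> \<in> lmeasurable" and p: "2 \<le> p" "p \<le> q"
  shows "measure lebesgue \<Omega> powr (2/q - 2/p) * rayleigh_inf s \<Omega> q \<le> rayleigh_inf s \<Omega> p"
  unfolding rayleigh_inf_def[of s \<Omega> p]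
proof (rule cInf_greatest)
  show "rayleigh s \<Omega> p ` D0_nonzero s \<Omega> \<noteq> {}" using ne by simp
  fix y assume "y \<in> rayleigh s \<Omega> p ` D0_nonzero s \<Omega>"
  then obtain u where u: "u \<in> D0_nonzero s \<Omega>" and y: "y = rayleigh s \<Omega> p u" by auto
  have "measure lebesgue \<Omega> powr (2/q - 2/p) * rayleigh_inf s \<Omega> q
          \<le> measure lebesgue \<Omega> powr (2/q - 2/p) * rayleigh s \<Omega> q u"
    using rayleigh_inf_le[OF u \<Omega>] p by (intro mult_left_mono) (auto simp: q_def)
  also have "\<dots> \<le> y" unfolding y q_def by (rule rayleigh_ge_Holder[OF u \<Omega> p[unfolded q_def]])
  finally show "measure lebesgue \<Omega> powr (2/q - 2/p) * rayleigh_inf s \<Omega> q \<le> y" .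
qed

lemma Lq_pow_tendsto_left:
  fixes s :: real and \<Omega> :: "'a::euclidean_space set"
  defines "q \<equiv> crit_exp s DIM('a)"
  assumes u: "u \<in> D0 s \<Omega>" and \<Omega>: "\<Omega> \<in> lmeasurable" and q: "0 < q"
  shows "((\<lambda>p. Lq_pow \<Omega> p u) \<longlongrightarrow> Lq_pow \<Omega> q u) (at_left q)"
proof (rule tendsto_at_left_sequentially[OF q])
  fix P :: "nat \<Rightarrow> real"
  assume P: "\<And>n. P n < q" "\<And>n. 0 < P n" "P \<longlonglongrightarrow> q"
  have iq: "integrable lebesgue (\<lambda>x. indicator \<Omega> x * \<bar>u x\<bar> powr q)"
    using integrable_D0_powr_on[OF u \<Omega>] q by (simp add: q_def)
  have "(\<lambda>n. \<integral>x. indicator \<Omega> x * \<bar>u x\<bar> powr P n \<partial>lebesgue)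
          \<longlonglongrightarrow> (\<integral>x. indicator \<Omega> x * \<bar>u x\<bar> powr q \<partial>lebesgue)"
  proof (rule integral_dominated_convergence[where w="\<lambda>x. indicator \<Omega> x + indicator \<Omega> x * \<bar>u x\<bar> powr q"])
    show "(\<lambda>x. indicator \<Omega> x * \<bar>u x\<bar> powr q) \<in> borel_measurable lebesgue"
      using iq by (rule borel_measurable_integrable)
    show "(\<lambda>x. indicator \<Omega> x * \<bar>u x\<bar> powr P n) \<in> borel_measurable lebesgue" for n
      using integrable_D0_powr_on[OF u \<Omega>, of "P n"] P(1,2)[of n]
      by (simp add: q_def less_imp_le borel_measurable_integrable)
    show "integrable lebesgue (\<lambda>x. indicator \<Omega> x + indicator \<Omega> x * \<bar>u x\<bar> powr q)"
      using iq \<Omega> by (simp add: lmeasurable_iff_integrable)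
    show "AE x in lebesgue. (\<lambda>n. indicator \<Omega> x * \<bar>u x\<bar> powr P n) \<longlonglongrightarrow> indicator \<Omega> x * \<bar>u x\<bar> powr q"
    proof (intro AE_I2)
      fix x
      have "u x \<noteq> 0 \<Longrightarrow> (\<lambda>n. \<bar>u x\<bar> powr P n) \<longlonglongrightarrow> \<bar>u x\<bar> powr q"
        by (rule tendsto_powr') (use P(3) in auto)
      then show "(\<lambda>n. indicator \<Omega> x * \<bar>u x\<bar> powr P n) \<longlonglongrightarrow> indicator \<Omega> x * \<bar>u x\<bar> powr q"
        by (cases "u x = 0") (auto intro: tendsto_mult tendsto_const)
    qed
    show "AE x in lebesgue. norm (indicator \<Omega> x * \<bar>u x\<bar> powr P n)
            \<le> indicator \<Omega> x + indicator \<Omega> x * \<bar>u x\<bar> powr q" for n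
      using powr_le_one_plus_powr[of "\<bar>u _\<bar>" "P n" q] P(1,2)[of n]
      by (intro AE_I2) (auto simp: indicator_def less_imp_le)
  qed
  then show "(\<lambda>n. Lq_pow \<Omega> (P n) u) \<longlonglongrightarrow> Lq_pow \<Omega> q u"
    by (simp add: Lq_pow_eq_integral)
qed

lemma rayleigh_tendsto_left:
  fixes s :: real and \<Omega> :: "'a::euclidean_space set"
  defines "q \<equiv> crit_exp s DIM('a)"
  assumes u: "u \<in> D0_nonzero s \<Omega>" and \<Omega>: "\<Omega> \<in> lmeasurable" and q: "0 < q"
  shows "((\<lambda>p. rayleigh s \<Omega> p u) \<longlongrightarrow> rayleigh s \<Omega> q u) (at_left q)"
  unfolding rayleigh_def
  using Lq_pow_tendsto_left[of u s \<Omega>] Lq_pow_pos[OF u \<Omega>, of q] u \<Omega> q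
  by (intro tendsto_divide tendsto_const tendsto_powr' tendsto_ident_at)
     (auto simp: D0_nonzero_def q_def)

lemma rayleigh_inf_tendsto_left:
  fixes s :: real and \<Omega> :: "'a::euclidean_space set"
  defines "q \<equiv> crit_exp s DIM('a)"
  assumes ne: "D0_nonzero s \<Omega> \<noteq> {}" and \<Omega>: "\<Omega> \<in> lmeasurable" and q: "2 < q"
  shows "((\<lambda>p. rayleigh_inf s \<Omega> p) \<longlongrightarrow> rayleigh_inf s \<Omega> q) (at_left q)"
proof -
  have p_near_q: "eventually (\<lambda>p. 2 < p \<and> p < q) (at_left q)"
    using eventually_at_left_real[OF q] by simp
  show ?thesis
  proof (rule order_tendstoI)
    fix a assume a: "a < rayleigh_inf s \<Omega> q"
    obtain u where "u \<in> D0_nonzero s \<Omega>" using ne by blast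
    then have \<mu>: "0 < measure lebesgue \<Omega>" by (rule measure_pos_if_D0_nonzero[OF _ \<Omega>])
    have "((\<lambda>p. measure lebesgue \<Omega> powr (2/q - 2/p) * rayleigh_inf s \<Omega> q)
            \<longlongrightarrow> measure lebesgue \<Omega> powr (2/q - 2/q) * rayleigh_inf s \<Omega> q) (at_left q)"
      using \<mu> q by (intro tendsto_intros) auto
    then have "eventually (\<lambda>p. a < measure lebesgue \<Omega> powr (2/q - 2/p) * rayleigh_inf s \<Omega> q) (at_left q)"
      using a \<mu> by (intro order_tendstoD) auto
    with p_near_q show "eventually (\<lambda>p. a < rayleigh_inf s \<Omega> p) (at_left q)"
    proof eventually_elim
      case (elim p)
      then show ?case
        using rayleigh_inf_ge_Holder[OF ne \<Omega>, of p] by (simp add: q_def)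
    qed
  next
    fix a assume "rayleigh_inf s \<Omega> q < a"
    then obtain u where u: "u \<in> D0_nonzero s \<Omega>" and "rayleigh s \<Omega> q u < a"
      unfolding rayleigh_inf_def using cInf_less_iff[OF _ bdd_below_rayleigh[OF \<Omega>]] ne q
      by (auto simp: q_def)
    then have "eventually (\<lambda>p. rayleigh s \<Omega> p u < a) (at_left q)"
      using rayleigh_tendsto_left[OF u \<Omega>] q by (intro order_tendstoD) (auto simp: q_def)
    with p_near_q show "eventually (\<lambda>p. rayleigh_inf s \<Omega> p < a) (at_left q)"
    proof eventually_elim
      case (elim p)
      then show ?case
        using rayleigh_inf_le[OF u \<Omega>, of p] by (simp add: q_def)
    qed
  qed
qed

lemma nehari_level_tendsto_crit_exp:
  fixes s :: real and \<Omega> :: "'a::euclidean_space set"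
  defines "q \<equiv> crit_exp s DIM('a)"
  assumes s: "0 < s" and N: "2 * s < real DIM('a)" and \<Omega>: "\<Omega> \<in> lmeasurable"
  shows "((\<lambda>p. nehari_level s \<Omega> p) \<longlongrightarrow> nehari_level s \<Omega> q) (at_left q)"
proof (cases "D0_nonzero s \<Omega> = {}")
  case True
  then have "Nehari s \<Omega> p = {}" for p using Nehari_subset_D0_nonzero by blast
  then show ?thesis by (simp add: nehari_level_def)
next
  case ne: False
  have q: "2 < q" using s N by (simp add: q_def crit_exp_def field_simps)
  have p_near_q: "eventually (\<lambda>p. 2 < p \<and> p < q) (at_left q)"
    using eventually_at_left_real[OF q] by simp
  have lim: "((\<lambda>p. (1/2 - 1/p) * rayleigh_inf s \<Omega> p powr (p/(p-2)))
          \<longlongrightarrow> (1/2 - 1/q) * rayleigh_inf s \<Omega> q powr (q/(q-2))) (at_left q)"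
  proof (intro tendsto_mult tendsto_diff tendsto_const tendsto_divide tendsto_ident_at tendsto_powr'
      rayleigh_inf_tendsto_left[OF ne \<Omega>, folded q_def])
    show "q \<noteq> 0" "q - 2 \<noteq> 0" "2 < q" using q by auto
    from p_near_q have "eventually (\<lambda>p. 0 \<le> rayleigh_inf s \<Omega> p) (at_left q)"
    proof eventually_elim
      case (elim p)
      then show ?case using rayleigh_inf_nonneg[OF ne \<Omega>, of p] by (simp add: q_def)
    qed
    then show "rayleigh_inf s \<Omega> q \<noteq> 0 \<or> 0 < q / (q - 2) \<and> eventually (\<lambda>p. 0 \<le> rayleigh_inf s \<Omega> p) (at_left q)"
      using q by auto
  qed
  from p_near_q
  have eq: "eventually (\<lambda>p. (1/2 - 1/p) * rayleigh_inf s \<Omega> p powr (p/(p-2)) = nehari_level s \<Omega> p) (at_left q)"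
  proof eventually_elim
    case (elim p)
    then show ?case using nehari_level_eq_rayleigh_inf[OF ne \<Omega>, of p] by (simp add: q_def)
  qed
  have "(1/2 - 1/q) * rayleigh_inf s \<Omega> q powr (q/(q-2)) = nehari_level s \<Omega> q"
    using nehari_level_eq_rayleigh_inf[OF ne \<Omega>, of q] q by (simp add: q_def)
  with Lim_transform_eventually[OF lim eq] show ?thesis by simp
qed

theorem proposition3p4:
  fixes s :: real and \<Omega> :: "(real ^ 'n) set"
  assumes "0 < s" "s < 1"
    and "real CARD('n) > 2 * s"
    and "smooth_bounded_domain \<Omega>"
  shows "((\<lambda>p. nehari_level s \<Omega> p) \<longlongrightarrow> nehari_level s \<Omega> (crit_exp s CARD('n)))
           (at_left (crit_exp s CARD('n)))"
proof -
  have "\<Omega> \<in> lmeasurable"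
    using assms(4) by (intro lmeasurable_open) (auto simp: smooth_bounded_domain_def)
  from nehari_level_tendsto_crit_exp[OF assms(1) _ this] assms(3) show ?thesis by simp
qed

end
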